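(* Let $K$ be a connected CW complex, $f:K\to K$ a pointed cellular map with $f\circ f\simeq f$, and $H:K\times I\to K$ a (not necessarily pointed) homotopy from $f$ to $f^2$. Let $d:K\to\mathrm{Tel}(f)$ and $u:\mathrm{Tel}(f)\to K$ be the maps described in the context. Then for every finite CW complex $L$ and every map $h:L\to\mathrm{Tel}(f)$, the map $d\circ u\circ h$ is homotopic to $h$.
   Context: $\mathrm{Tel}(f)$ is the union over $n\in\mathbb{Z}$ of the unreduced mapping cylinders $M_n$ of $f:K_n\to K_{n+1}$, each $K_n$ a copy of $K$, glued along the $K_{n+1}$. The map $d:K\to\mathrm{Tel}(f)$ is $f$ regarded as a map into the copy $K_0$; $u:\mathrm{Tel}(f)\to K$ equals $f$ on each copy $K_n$ and equals $H(x,t)$ at the point $(x,t)$ of $M_n$. Homotopies are free. *)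

theory Defs
  imports "HOL-Analysis.Analysis"
begin

text \<open>The closed n-disc, its boundary sphere (empty for n = 0) and its interior,
  inside the library's Euclidean_space n (functions nat => real vanishing from n on).\<close>

definition disc :: "nat \<Rightarrow> (nat \<Rightarrow> real) topology" where
  "disc n = subtopology (Euclidean_space n) {x. (\<Sum>i<n. (x i)^2) \<le> 1}"

definition disc_boundary :: "nat \<Rightarrow> (nat \<Rightarrow> real) set" where
  "disc_boundary n = {x \<in> topspace (Euclidean_space n). (\<Sum>i<n. (x i)^2) = 1}"

definition disc_interior :: "nat \<Rightarrow> (nat \<Rightarrow> real) set" where
  "disc_interior n = {x \<in> topspace (Euclidean_space n). (\<Sum>i<n. (x i)^2) < 1}"

definition open_cell :: "('i \<Rightarrow> nat) \<Rightarrow> ('i \<Rightarrow> (nat \<Rightarrow> real) \<Rightarrow> 'a) \<Rightarrow> 'i \<Rightarrow> 'a set" where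
  "open_cell cdim \<Phi> i = \<Phi> i ` disc_interior (cdim i)"

definition closed_cell :: "('i \<Rightarrow> nat) \<Rightarrow> ('i \<Rightarrow> (nat \<Rightarrow> real) \<Rightarrow> 'a) \<Rightarrow> 'i \<Rightarrow> 'a set" where
  "closed_cell cdim \<Phi> i = \<Phi> i ` topspace (disc (cdim i))"

definition cw_structure ::
  "'a topology \<Rightarrow> 'i set \<Rightarrow> ('i \<Rightarrow> nat) \<Rightarrow> ('i \<Rightarrow> (nat \<Rightarrow> real) \<Rightarrow> 'a) \<Rightarrow> bool" where
  "cw_structure X I cdim \<Phi> \<longleftrightarrow>
     Hausdorff_space X \<and>
     (\<forall>i\<in>I. continuous_map (disc (cdim i)) X (\<Phi> i)) \<and>
     (\<forall>i\<in>I. homeomorphic_map (subtopology (disc (cdim i)) (disc_interior (cdim i)))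
                               (subtopology X (open_cell cdim \<Phi> i)) (\<Phi> i)) \<and>
     (\<forall>i\<in>I. \<forall>j\<in>I. i \<noteq> j \<longrightarrow> open_cell cdim \<Phi> i \<inter> open_cell cdim \<Phi> j = {}) \<and>
     (\<Union>i\<in>I. open_cell cdim \<Phi> i) = topspace X \<and>
     (\<forall>i\<in>I. \<exists>F. F \<subseteq> I \<and> finite F \<and> (\<forall>j\<in>F. cdim j < cdim i) \<and>
                 \<Phi> i ` disc_boundary (cdim i) \<subseteq> (\<Union>j\<in>F. open_cell cdim \<Phi> j)) \<and>
     (\<forall>A. A \<subseteq> topspace X \<longrightarrow>
          (closedin X A \<longleftrightarrow>
           (\<forall>i\<in>I. closedin (disc (cdim i)) {x \<in> topspace (disc (cdim i)). \<Phi> i x \<in> A})))"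

definition skeleton :: "'i set \<Rightarrow> ('i \<Rightarrow> nat) \<Rightarrow> ('i \<Rightarrow> (nat \<Rightarrow> real) \<Rightarrow> 'a) \<Rightarrow> nat \<Rightarrow> 'a set" where
  "skeleton I cdim \<Phi> n = (\<Union>i\<in>{i\<in>I. cdim i \<le> n}. closed_cell cdim \<Phi> i)"

definition cellular_map ::
  "'i set \<Rightarrow> ('i \<Rightarrow> nat) \<Rightarrow> ('i \<Rightarrow> (nat \<Rightarrow> real) \<Rightarrow> 'a) \<Rightarrow> ('a \<Rightarrow> 'a) \<Rightarrow> bool" where
  "cellular_map I cdim \<Phi> f \<longleftrightarrow> (\<forall>n. f ` skeleton I cdim \<Phi> n \<subseteq> skeleton I cdim \<Phi> n)"

text \<open>A finite CW complex: a space admitting a CW structure with finitely many cells.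
  The index type is fixed to nat (no loss, since the index set is finite).\<close>

definition finite_cw_complex :: "'b topology \<Rightarrow> bool" where
  "finite_cw_complex L \<longleftrightarrow>
     (\<exists>(I::nat set) cdim \<Phi>. finite I \<and> cw_structure L I cdim \<Phi>)"

text \<open>Tel(f) is the quotient of Z x K x [0,1] (Z discrete) by (n,x,1) ~ (n+1, f x, 0).
  Each equivalence class has a unique representative (n,x,t) with 0 <= t < 1;
  tel_proj sends a point to that representative.\<close>

definition tel_domain :: "'a topology \<Rightarrow> (int \<times> 'a \<times> real) topology" where
  "tel_domain K = prod_topology (discrete_topology UNIV) (prod_topology K (top_of_set {0..1}))"

definition tel_proj :: "('a \<Rightarrow> 'a) \<Rightarrow> int \<times> 'a \<times> real \<Rightarrow> int \<times> 'a \<times> real" where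
  "tel_proj f p = (case p of (n, x, t) \<Rightarrow> if t = 1 then (n + 1, f x, 0) else (n, x, t))"

definition Tel :: "'a topology \<Rightarrow> ('a \<Rightarrow> 'a) \<Rightarrow> (int \<times> 'a \<times> real) topology" where
  "Tel K f = topology (\<lambda>U. U \<subseteq> tel_proj f ` topspace (tel_domain K) \<and>
                 openin (tel_domain K) {p \<in> topspace (tel_domain K). tel_proj f p \<in> U})"

definition tel_d :: "('a \<Rightarrow> 'a) \<Rightarrow> 'a \<Rightarrow> int \<times> 'a \<times> real" where
  "tel_d f x = (0, f x, 0)"

definition tel_u :: "('a \<times> real \<Rightarrow> 'a) \<Rightarrow> int \<times> 'a \<times> real \<Rightarrow> 'a" where
  "tel_u H p = (case p of (n, x, t) \<Rightarrow> H (x, t))"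

end

theory Submission
  imports Defs
begin

text \<open>
  Since L is compact, h stays below some level c of the telescope. Flowing points forward along
  the telescope is a homotopy from the identity of Tel(f) to a map push_c which moves everything
  below level c into the copy K_c, applying powers of f on the way. Let i_n be the inclusion of
  the copy K_n, so that d = i_0 \<circ> f and, by H(x, 0) = f x, u \<circ> i_n = f. With
  g = u \<circ> push_c \<circ> h this gives
    h \<simeq> push_(c+2) \<circ> h = i_(c+2) \<circ> f \<circ> g   and   d \<circ> u \<circ> h \<simeq> d \<circ> u \<circ> push_c \<circ> h = i_0 \<circ> f \<circ> g.
  Flowing K_0 up to K_(c+2) gives i_0 \<simeq> i_(c+2) \<circ> f^(c+2), and f^(c+3) \<simeq> f because f \<circ> f \<simeq> f;
  so i_0 \<circ> f \<simeq> i_(c+2) \<circ> f, which joins the two homotopies.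
\<close>

section \<open>Homotopies and compactness\<close>

declare homotopic_with_trans [trans]

lemma continuous_map_funpow: "continuous_map X X f \<Longrightarrow> continuous_map X X (f ^^ n)"
  by (induction n) (auto intro: continuous_map_compose)

lemma continuous_map_prod_discrete_slices:
  assumes "\<And>n. n \<in> S \<Longrightarrow> continuous_map (prod_topology Z W) Y (\<lambda>(z, w). g (z, n, w))"
  shows "continuous_map (prod_topology Z (prod_topology (discrete_topology S) W)) Y g"
    (is "continuous_map ?X Y g")
proof (rule pasting_lemma[where I=S and T="\<lambda>n. {p \<in> topspace ?X. fst (snd p) = n}"
      and f="\<lambda>n p. g (fst p, n, snd (snd p))"])
  have index: "continuous_map ?X (discrete_topology S) (\<lambda>p. fst (snd p))"
    by (rule continuous_map_compose[OF continuous_map_snd continuous_map_fst, unfolded o_def])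
  show "openin ?X {p \<in> topspace ?X. fst (snd p) = n}" if "n \<in> S" for n
    using openin_continuous_map_preimage[OF index, of "{n}"] that by simp
  have "continuous_map ?X (prod_topology Z W) (\<lambda>p. (fst p, snd (snd p)))"
    by (intro continuous_map_pairedI continuous_map_fst
        continuous_map_compose[OF continuous_map_snd continuous_map_snd, unfolded o_def])
  from continuous_map_compose[OF this assms]
  show "continuous_map (subtopology ?X {p \<in> topspace ?X. fst (snd p) = n}) Y
      (\<lambda>p. g (fst p, n, snd (snd p)))" if "n \<in> S" for n
    using that by (simp add: o_def continuous_map_from_subtopology)
qed auto

lemma homotopic_with_trueI:
  assumes "continuous_map (prod_topology (top_of_set {0..1::real}) X) Y k"
    and "\<And>x. x \<in> topspace X \<Longrightarrow> k (0, x) = p x" and "\<And>x. x \<in> topspace X \<Longrightarrow> k (1, x) = q x"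
  shows "homotopic_with (\<lambda>_. True) X Y p q"
proof (subst homotopic_with)
  show "\<exists>h. continuous_map (prod_topology (top_of_set {0..1::real}) X) Y h \<and>
      (\<forall>x\<in>topspace X. h (0, x) = p x) \<and> (\<forall>x\<in>topspace X. h (1, x) = q x) \<and> (\<forall>t\<in>{0..1}. True)"
    using assms by (intro exI[of _ k]) auto
qed simp

lemma homotopic_with_prod_homotopy:
  assumes "continuous_map (prod_topology X (top_of_set {0..1::real})) Y H"
  shows "homotopic_with (\<lambda>_. True) X Y (\<lambda>x. H (x, 0)) (\<lambda>x. H (x, 1))"
proof (rule homotopic_with_trueI)
  show "continuous_map (prod_topology (top_of_set {0..1::real}) X) Y (H \<circ> (\<lambda>(s, x). (x, s)))"
    using homeomorphic_imp_continuous_map[OF homeomorphic_map_swap] assms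
    by (rule continuous_map_compose)
qed auto

lemma homotopic_funpow_Suc_of_idempotent:
  assumes "homotopic_with (\<lambda>_. True) X X f (f \<circ> f)"
  shows "homotopic_with (\<lambda>_. True) X X (f ^^ Suc k) f"
proof (induction k)
  case 0
  show ?case
    using homotopic_with_imp_continuous_maps[OF assms] by simp
next
  case (Suc k)
  have "homotopic_with (\<lambda>_. True) X X f f"
    using homotopic_with_imp_continuous_maps[OF assms] by simp
  with Suc.IH have "homotopic_with (\<lambda>_. True) X X (f \<circ> f ^^ Suc k) (f \<circ> f)"
    by (rule homotopic_compose)
  then have "homotopic_with (\<lambda>_. True) X X (f \<circ> f ^^ Suc k) f"
    using homotopic_with_symD[OF assms] by (rule homotopic_with_trans)
  then show ?case
    by (subst funpow.simps(2))
qed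

lemma compact_space_bounded_above_nat:
  assumes "compact_space X" and "continuous_map X euclideanreal g"
  obtains c :: nat where "\<And>x. x \<in> topspace X \<Longrightarrow> g x \<le> real c"
proof -
  have "compact (g ` topspace X)"
    using image_compactin[OF _ assms(2)] assms(1) by (simp add: compact_space_def)
  then have "bdd_above (g ` topspace X)"
    by (simp add: bounded_imp_bdd_above compact_imp_bounded)
  then obtain B where "\<And>x. x \<in> topspace X \<Longrightarrow> g x \<le> B"
    by (auto simp: bdd_above_def)
  moreover obtain c :: nat where "B \<le> real c"
    using real_arch_simple by blast
  ultimately show ?thesis
    using that order_trans by blast
qed

lemma compact_space_disc: "compact_space (disc n)"
proof -
  define B where "B = PiE UNIV (\<lambda>i::nat. if i < n then {-1..1::real} else {0})"
  define S where "S = {x::nat\<Rightarrow>real. (\<forall>i\<ge>n. x i = 0) \<and> (\<Sum>i<n. (x i)^2) \<le> 1}"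
  have "compactin (powertop_real UNIV) B"
    unfolding B_def by (simp add: compactin_PiE)
  moreover have "S \<subseteq> B"
  proof
    fix x assume "x \<in> S"
    then have x: "\<forall>i\<ge>n. x i = 0" "(\<Sum>i<n. (x i)^2) \<le> 1"
      by (auto simp: S_def)
    have "(x i)^2 \<le> 1" if "i < n" for i
      using member_le_sum[of i "{..<n}" "\<lambda>i. (x i)^2"] that x(2) by simp
    then show "x \<in> B"
      using x by (auto simp: B_def abs_le_iff not_less abs_square_le_1)
  qed
  moreover have "closedin (powertop_real UNIV) S"
  proof -
    have proj: "continuous_map (powertop_real UNIV) euclideanreal (\<lambda>x. x i)" for i
      by (rule continuous_map_product_projection) simp
    have "closedin (powertop_real UNIV) {x. x i = 0}" for i
      using closedin_continuous_map_preimage[OF proj, of "{0}"] by simp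
    moreover have "continuous_map (powertop_real UNIV) euclideanreal (\<lambda>x. \<Sum>i<n. (x i)^2)"
      using proj by (intro continuous_map_sum continuous_map_real_pow) auto
    from closedin_continuous_map_preimage[OF this, of "{..1}"]
    have "closedin (powertop_real UNIV) {x. (\<Sum>i<n. (x i)^2) \<le> 1}"
      by simp
    moreover have "S = (\<Inter>i\<in>{n..}. {x. x i = 0}) \<inter> {x. (\<Sum>i<n. (x i)^2) \<le> 1}"
      by (auto simp: S_def)
    ultimately show ?thesis
      by (auto intro!: closedin_Int closedin_Inter)
  qed
  ultimately have "compactin (powertop_real UNIV) S"
    by (rule closed_compactin)
  moreover have "disc n = subtopology (powertop_real UNIV) S"
    by (simp add: disc_def Euclidean_space_def subtopology_subtopology S_def Collect_conj_eq)
  ultimately show ?thesis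
    by (simp add: compact_space_subtopology)
qed

lemma compact_space_finite_cw_complex:
  assumes "finite_cw_complex L"
  shows "compact_space L"
proof -
  obtain I :: "nat set" and cdim \<Phi> where I: "finite I" and cw: "cw_structure L I cdim \<Phi>"
    using assms unfolding finite_cw_complex_def by blast
  then have \<Phi>: "continuous_map (disc (cdim i)) L (\<Phi> i)" if "i \<in> I" for i
    using that by (auto simp: cw_structure_def)
  have "topspace L = (\<Union>i\<in>I. open_cell cdim \<Phi> i)"
    using cw by (auto simp: cw_structure_def)
  also have "\<dots> \<subseteq> (\<Union>i\<in>I. closed_cell cdim \<Phi> i)"
    unfolding open_cell_def closed_cell_def disc_interior_def disc_def
    by (auto simp: topspace_Euclidean_space)
  finally have "topspace L \<subseteq> (\<Union>i\<in>I. closed_cell cdim \<Phi> i)" .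
  moreover have "(\<Union>i\<in>I. closed_cell cdim \<Phi> i) \<subseteq> topspace L"
    unfolding closed_cell_def using \<Phi> continuous_map_image_subset_topspace by blast
  moreover have "compactin L (closed_cell cdim \<Phi> i)" if "i \<in> I" for i
    unfolding closed_cell_def
    using image_compactin[OF _ \<Phi>[OF that]] compact_space_disc by (simp add: compact_space_def)
  with I have "compactin L (\<Union>i\<in>I. closed_cell cdim \<Phi> i)"
    by (intro compactin_Union) auto
  ultimately show ?thesis
    unfolding compact_space_def by (metis subset_antisym)
qed

section \<open>The mapping telescope as a quotient space\<close>

lemma istopology_Tel:
  "istopology (\<lambda>U. U \<subseteq> tel_proj f ` topspace (tel_domain K) \<and>
      openin (tel_domain K) {p \<in> topspace (tel_domain K). tel_proj f p \<in> U})"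
proof -
  have "{p \<in> topspace (tel_domain K). tel_proj f p \<in> S \<inter> T} =
      {p \<in> topspace (tel_domain K). tel_proj f p \<in> S} \<inter> {p \<in> topspace (tel_domain K). tel_proj f p \<in> T}"
    for S T by auto
  moreover have "{p \<in> topspace (tel_domain K). tel_proj f p \<in> \<Union>\<K>} =
      (\<Union>S\<in>\<K>. {p \<in> topspace (tel_domain K). tel_proj f p \<in> S})" for \<K> by auto
  ultimately show ?thesis
    unfolding istopology_def by auto
qed

lemma openin_Tel:
  "openin (Tel K f) U \<longleftrightarrow> U \<subseteq> tel_proj f ` topspace (tel_domain K) \<and>
      openin (tel_domain K) {p \<in> topspace (tel_domain K). tel_proj f p \<in> U}"
  unfolding Tel_def using istopology_Tel[of f K] by simp

lemma topspace_Tel: "topspace (Tel K f) = tel_proj f ` topspace (tel_domain K)"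
proof
  show "topspace (Tel K f) \<subseteq> tel_proj f ` topspace (tel_domain K)"
    unfolding topspace_def openin_Tel by auto
  have "openin (Tel K f) (tel_proj f ` topspace (tel_domain K))"
    unfolding openin_Tel by (auto intro: openin_subopen[THEN iffD2])
  then show "tel_proj f ` topspace (tel_domain K) \<subseteq> topspace (Tel K f)"
    by (rule openin_subset)
qed

lemma quotient_map_tel_proj: "quotient_map (tel_domain K) (Tel K f) (tel_proj f)"
  unfolding quotient_map_def topspace_Tel by (auto simp: openin_Tel)

lemma continuous_map_tel_proj: "continuous_map (tel_domain K) (Tel K f) (tel_proj f)"
  using quotient_imp_continuous_map quotient_map_tel_proj by blast

lemma topspace_Tel_eq:
  assumes "f ` topspace K \<subseteq> topspace K"
  shows "topspace (Tel K f) = UNIV \<times> topspace K \<times> {0..<1}"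
proof
  show "topspace (Tel K f) \<subseteq> UNIV \<times> topspace K \<times> {0..<1}"
    using assms by (auto simp: topspace_Tel tel_domain_def tel_proj_def split: if_splits)
  have "(n, x, t) = tel_proj f (n, x, t)" if "t < 1" for n x t
    using that by (simp add: tel_proj_def)
  then show "UNIV \<times> topspace K \<times> {0..<1} \<subseteq> topspace (Tel K f)"
    unfolding topspace_Tel tel_domain_def by fastforce
qed

lemma continuous_map_tel_proj_compose:
  assumes "continuous_map X K \<xi>" and "continuous_map X euclideanreal \<tau>"
    and "\<And>z. z \<in> topspace X \<Longrightarrow> 0 \<le> \<tau> z \<and> \<tau> z \<le> 1"
  shows "continuous_map X (Tel K f) (\<lambda>z. tel_proj f (n, \<xi> z, \<tau> z))"
proof -
  have "continuous_map X (tel_domain K) (\<lambda>z. (n, \<xi> z, \<tau> z))"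
    unfolding tel_domain_def continuous_map_pairwise o_def
    using assms by (auto simp: continuous_map_in_subtopology)
  then show ?thesis
    using continuous_map_compose[OF _ continuous_map_tel_proj] by (simp add: o_def)
qed

definition tel_incl :: "int \<Rightarrow> 'a \<Rightarrow> int \<times> 'a \<times> real" where
  "tel_incl n x = (n, x, 0)"

lemma continuous_map_tel_incl: "continuous_map K (Tel K f) (tel_incl n)"
  using continuous_map_tel_proj_compose[of K K id "\<lambda>_. 0" f n]
  by (simp add: tel_incl_def[abs_def] tel_proj_def)

lemma tel_d_eq: "tel_d f = tel_incl 0 \<circ> f"
  by (simp add: fun_eq_iff tel_d_def tel_incl_def)

lemma continuous_map_tel_u:
  assumes "continuous_map (prod_topology K (top_of_set {0..1})) K H"
    and "\<And>x. x \<in> topspace K \<Longrightarrow> H (x, 0) = f x"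
    and "\<And>x. x \<in> topspace K \<Longrightarrow> H (x, 1) = f (f x)"
    and "f ` topspace K \<subseteq> topspace K"
  shows "continuous_map (Tel K f) K (tel_u H)"
proof -
  have "continuous_map (tel_domain K) K (tel_u H \<circ> tel_proj f)"
  proof (rule continuous_map_eq)
    show "continuous_map (tel_domain K) K (H \<circ> snd)"
      unfolding tel_domain_def using assms(1) by (rule continuous_map_compose[OF continuous_map_snd])
    show "(H \<circ> snd) p = (tel_u H \<circ> tel_proj f) p" if "p \<in> topspace (tel_domain K)" for p
      using that assms(2-4) by (auto simp: tel_domain_def tel_u_def tel_proj_def)
  qed
  then show ?thesis
    using continuous_compose_quotient_map_eq[OF quotient_map_tel_proj] by blast
qed

definition tel_level :: "int \<times> 'a \<times> real \<Rightarrow> real" where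
  "tel_level p = real_of_int (fst p) + snd (snd p)"

lemma tel_level_tel_proj: "tel_level (tel_proj f (n, x, t)) = real_of_int n + t"
  by (simp add: tel_level_def tel_proj_def)

lemma continuous_map_tel_level: "continuous_map (Tel K f) euclideanreal tel_level"
proof -
  have "continuous_map (tel_domain K) euclideanreal (\<lambda>p. real_of_int (fst p) + snd (snd p))"
  proof (intro continuous_map_add)
    show "continuous_map (tel_domain K) euclideanreal (\<lambda>p. real_of_int (fst p))"
      unfolding tel_domain_def by (rule continuous_map_compose[OF continuous_map_fst, unfolded o_def]) simp
    show "continuous_map (tel_domain K) euclideanreal (\<lambda>p. snd (snd p))"
      unfolding tel_domain_def
      by (rule continuous_map_into_fulltopology[OF
            continuous_map_compose[OF continuous_map_snd continuous_map_snd, unfolded o_def]])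
  qed
  then have "continuous_map (tel_domain K) euclideanreal (tel_level \<circ> tel_proj f)"
    by (rule continuous_map_eq) (auto simp: tel_level_def tel_proj_def)
  then show ?thesis
    using continuous_compose_quotient_map_eq[OF quotient_map_tel_proj] by blast
qed

section \<open>Flowing along the telescope\<close>

text \<open>The flow moves (n, x, t) forward by time a \<ge> 0; each time it leaves a mapping cylinder
  through its far end, f is applied.\<close>

definition tel_flow :: "('a \<Rightarrow> 'a) \<Rightarrow> real \<Rightarrow> int \<times> 'a \<times> real \<Rightarrow> int \<times> 'a \<times> real" where
  "tel_flow f a p = (case p of (n, x, t) \<Rightarrow>
     (n + \<lfloor>t + a\<rfloor>, (f ^^ nat \<lfloor>t + a\<rfloor>) x, t + a - of_int \<lfloor>t + a\<rfloor>))"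

lemma tel_flow_0: "0 \<le> t \<Longrightarrow> t < 1 \<Longrightarrow> tel_flow f 0 (n, x, t) = (n, x, t)"
  by (simp add: tel_flow_def floor_eq_iff)

lemma tel_flow_tel_proj:
  assumes "0 \<le> a"
  shows "tel_flow f a (tel_proj f (n, x, t)) = tel_flow f a (n, x, t)"
proof (cases "t = 1")
  case True
  have "nat \<lfloor>1 + a\<rfloor> = Suc (nat \<lfloor>a\<rfloor>)"
    using assms by (simp add: nat_add_distrib)
  then show ?thesis
    using True by (simp add: tel_flow_def tel_proj_def funpow_Suc_right del: funpow.simps)
qed (simp add: tel_proj_def)

lemma tel_proj_eq_tel_flow:
  assumes "real j \<le> t + a" and "t + a \<le> real j + 1"
  shows "tel_proj f (n + int j, (f ^^ j) x, t + a - real j) = tel_flow f a (n, x, t)"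
proof (cases "t + a = real j + 1")
  case True
  then have "\<lfloor>t + a\<rfloor> = int j + 1" by simp
  then show ?thesis
    using True by (simp add: tel_flow_def tel_proj_def nat_add_distrib)
next
  case False
  then have "\<lfloor>t + a\<rfloor> = int j"
    using assms by (simp add: floor_eq_iff)
  then show ?thesis
    using False by (simp add: tel_flow_def tel_proj_def)
qed

lemma continuous_map_tel_flow:
  assumes f: "continuous_map K K f"
    and \<xi>: "continuous_map X K \<xi>" and \<tau>: "continuous_map X euclideanreal \<tau>"
    and \<alpha>: "continuous_map X euclideanreal \<alpha>"
    and bounds: "\<And>z. z \<in> topspace X \<Longrightarrow> 0 \<le> \<tau> z \<and> \<tau> z \<le> 1 \<and> 0 \<le> \<alpha> z \<and> \<tau> z + \<alpha> z \<le> real M"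
  shows "continuous_map X (Tel K f) (\<lambda>z. tel_flow f (\<alpha> z) (n, \<xi> z, \<tau> z))"
proof -
  define S where "S j = {z \<in> topspace X. \<tau> z + \<alpha> z \<in> {real j..real j + 1}}" for j
  have \<tau>\<alpha>: "continuous_map X euclideanreal (\<lambda>z. \<tau> z + \<alpha> z)"
    using \<tau> \<alpha> by (intro continuous_intros)
  txt \<open>On S j the flow ends in the cylinder M_(n+j), where it is the projection of a continuous
    map into the domain of the quotient.\<close>
  show ?thesis
  proof (rule pasting_lemma_closed[where I="{0..M}" and T=S])
    show "closedin X (S j)" for j
      unfolding S_def by (rule closedin_continuous_map_preimage[OF \<tau>\<alpha>]) simp
    fix j
    have "continuous_map (subtopology X (S j)) (Tel K f)
        (\<lambda>z. tel_proj f (n + int j, (f ^^ j) (\<xi> z), \<tau> z + \<alpha> z - real j))"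
    proof (rule continuous_map_tel_proj_compose)
      show "continuous_map (subtopology X (S j)) K (\<lambda>z. (f ^^ j) (\<xi> z))"
        using continuous_map_compose[OF \<xi> continuous_map_funpow[OF f]]
        by (simp add: o_def continuous_map_from_subtopology)
      show "continuous_map (subtopology X (S j)) euclideanreal (\<lambda>z. \<tau> z + \<alpha> z - real j)"
        by (intro continuous_map_diff continuous_map_from_subtopology[OF \<tau>\<alpha>]) simp
    qed (auto simp: S_def)
    then show "continuous_map (subtopology X (S j)) (Tel K f)
        (\<lambda>z. tel_flow f (\<alpha> z) (n, \<xi> z, \<tau> z))"
      by (rule continuous_map_eq) (simp add: S_def tel_proj_eq_tel_flow)
  next
    fix z assume z: "z \<in> topspace X"
    have "real (nat \<lfloor>\<tau> z + \<alpha> z\<rfloor>) \<le> \<tau> z + \<alpha> z" "\<tau> z + \<alpha> z \<le> real (nat \<lfloor>\<tau> z + \<alpha> z\<rfloor>) + 1"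
      "nat \<lfloor>\<tau> z + \<alpha> z\<rfloor> \<le> M"
      using bounds[OF z] by (auto simp: nat_le_iff floor_le_iff)
    then show "\<exists>j. j \<in> {0..M} \<and> z \<in> S j \<and>
        tel_flow f (\<alpha> z) (n, \<xi> z, \<tau> z) = tel_flow f (\<alpha> z) (n, \<xi> z, \<tau> z)"
      using z by (auto simp: S_def)
  qed auto
qed

lemma homotopic_tel_incl_funpow:
  assumes f: "continuous_map K K f"
  shows "homotopic_with (\<lambda>_. True) K (Tel K f) (tel_incl n) (tel_incl (n + int m) \<circ> f ^^ m)"
proof (rule homotopic_with_trueI)
  show "continuous_map (prod_topology (top_of_set {0..1::real}) K) (Tel K f)
      (\<lambda>z. tel_flow f (fst z * real m) (n, snd z, 0))"
  proof (rule continuous_map_tel_flow[OF f, where M=m])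
    show "continuous_map (prod_topology (top_of_set {0..1::real}) K) euclideanreal (\<lambda>z. fst z * real m)"
      by (intro continuous_map_real_mult continuous_map_into_fulltopology[OF continuous_map_fst]) simp
  qed (auto simp: continuous_map_snd mult_left_le_one_le)
qed (simp_all add: tel_flow_0 tel_incl_def tel_flow_def)

lemma homotopic_tel_incl_shift:
  assumes ff: "homotopic_with (\<lambda>_. True) K K f (f \<circ> f)" and "n \<le> m"
  shows "homotopic_with (\<lambda>_. True) K (Tel K f) (tel_incl n \<circ> f) (tel_incl m \<circ> f)"
proof -
  define k where "k = nat (m - n)"
  have f: "continuous_map K K f"
    using homotopic_with_imp_continuous_maps[OF ff] by blast
  have "homotopic_with (\<lambda>_. True) K (Tel K f) (tel_incl n \<circ> f) (tel_incl m \<circ> f ^^ k \<circ> f)"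
    using homotopic_with_compose_continuous_map_right[OF homotopic_tel_incl_funpow[OF f, of n k] f] \<open>n \<le> m\<close>
    by (simp add: k_def)
  also have "homotopic_with (\<lambda>_. True) K (Tel K f) \<dots> (tel_incl m \<circ> f)"
    using homotopic_with_compose_continuous_map_left[OF homotopic_funpow_Suc_of_idempotent[OF ff, of k]
        continuous_map_tel_incl]
    by (simp only: funpow_Suc_right o_assoc)
  finally show ?thesis .
qed

definition tel_push :: "('a \<Rightarrow> 'a) \<Rightarrow> int \<Rightarrow> int \<times> 'a \<times> real \<Rightarrow> int \<times> 'a \<times> real" where
  "tel_push f c p = tel_flow f (max 0 (real_of_int c - tel_level p)) p"

lemma tel_push_below:
  assumes "real_of_int n + t \<le> real_of_int c"
  shows "tel_push f c (n, x, t) = tel_incl c ((f ^^ nat (c - n)) x)"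
proof -
  have "t + max 0 (real_of_int c - tel_level (n, x, t)) = real_of_int (c - n)"
    using assms by (simp add: tel_level_def)
  then show ?thesis
    by (simp add: tel_push_def tel_flow_def tel_incl_def)
qed

lemma tel_push_add_2:
  assumes fK: "f ` topspace K \<subseteq> topspace K" and H0: "\<And>x. x \<in> topspace K \<Longrightarrow> H (x, 0) = f x"
    and p: "p \<in> topspace (Tel K f)" and "tel_level p \<le> real_of_int c"
  shows "tel_push f (c + 2) p = tel_incl (c + 2) (f (tel_u H (tel_push f c p)))"
proof -
  obtain n x t where p: "p = (n, x, t)" and x: "x \<in> topspace K" and "0 \<le> t"
    using p topspace_Tel_eq[OF fK] by auto
  have lev: "real_of_int n + t \<le> real_of_int c"
    using \<open>tel_level p \<le> real_of_int c\<close> by (simp add: p tel_level_def)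
  then have "real_of_int n \<le> real_of_int c"
    using \<open>0 \<le> t\<close> by linarith
  then have "nat (c + 2 - n) = Suc (Suc (nat (c - n)))"
    by simp
  moreover have "(f ^^ k) x \<in> topspace K" for k
    using fK x by (induction k) auto
  ultimately show ?thesis
    using lev by (simp add: p tel_push_below tel_u_def tel_incl_def H0)
qed

lemma continuous_map_tel_push_homotopy_domain:
  assumes f: "continuous_map K K f"
  shows "continuous_map (prod_topology (top_of_set {0..1::real}) (tel_domain K)) (Tel K f)
     (\<lambda>(s, n, x, t). tel_flow f (s * max 0 (real_of_int c - (real_of_int n + t))) (n, x, t))"
proof -
  let ?X = "prod_topology (top_of_set {0..1::real}) (prod_topology K (top_of_set {0..1::real}))"
  let ?\<alpha> = "\<lambda>n z. fst z * max 0 (real_of_int c - (real_of_int n + snd (snd z)))"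
  have t: "continuous_map ?X euclideanreal (\<lambda>z. snd (snd z))"
    by (rule continuous_map_into_fulltopology[OF
          continuous_map_compose[OF continuous_map_snd continuous_map_snd, unfolded o_def]])
  txt \<open>The flow time is bounded on each slice n = const, but not uniformly in n.\<close>
  have slice: "continuous_map ?X (Tel K f) (\<lambda>z. tel_flow f (?\<alpha> n z) (n, fst (snd z), snd (snd z)))" for n
  proof (rule continuous_map_tel_flow[OF f _ t, where M="nat (c - n) + 1"])
    show "continuous_map ?X K (\<lambda>z. fst (snd z))"
      by (rule continuous_map_compose[OF continuous_map_snd continuous_map_fst, unfolded o_def])
    show "continuous_map ?X euclideanreal (?\<alpha> n)"
      using t continuous_map_into_fulltopology[OF continuous_map_fst]
      by (intro continuous_map_real_mult continuous_map_real_max continuous_map_diff continuous_map_add) auto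
    fix z assume "z \<in> topspace ?X"
    then have z: "0 \<le> fst z" "fst z \<le> 1" "0 \<le> snd (snd z)" "snd (snd z) \<le> 1"
      by auto
    then have "0 \<le> ?\<alpha> n z" "?\<alpha> n z \<le> max 0 (real_of_int c - (real_of_int n + snd (snd z)))"
      by (simp_all add: mult_left_le_one_le)
    moreover have "real_of_int (c - n) + 1 \<le> real (nat (c - n) + 1)"
      by simp
    ultimately show "0 \<le> snd (snd z) \<and> snd (snd z) \<le> 1 \<and> 0 \<le> ?\<alpha> n z \<and>
        snd (snd z) + ?\<alpha> n z \<le> real (nat (c - n) + 1)"
      using z by (auto simp: max_def split: if_splits)
  qed
  show ?thesis
    unfolding tel_domain_def
    by (rule continuous_map_prod_discrete_slices) (use slice in \<open>simp add: case_prod_unfold\<close>)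
qed

lemma homotopic_id_tel_push:
  assumes f: "continuous_map K K f"
  shows "homotopic_with (\<lambda>_. True) (Tel K f) (Tel K f) id (tel_push f c)"
proof (rule homotopic_with_trueI)
  let ?k = "\<lambda>(s, p). tel_flow f (s * max 0 (real_of_int c - tel_level p)) p"
  txt \<open>[0, 1] is locally compact, so its product with the quotient map tel_proj is again a
    quotient map.\<close>
  have "quotient_map (prod_topology (top_of_set {0..1::real}) (tel_domain K))
      (prod_topology (top_of_set {0..1::real}) (Tel K f)) (\<lambda>(s, p). (s, tel_proj f p))"
  proof (rule quotient_map_prod_right[OF _ _ quotient_map_tel_proj])
    show "locally_compact_space (top_of_set {0..1::real})"
      by (intro compact_imp_locally_compact_space compact_space_subtopology) simp
  qed (simp add: Hausdorff_space_subtopology)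
  moreover have "continuous_map (prod_topology (top_of_set {0..1::real}) (tel_domain K)) (Tel K f)
      (?k \<circ> (\<lambda>(s, p). (s, tel_proj f p)))"
    using continuous_map_tel_push_homotopy_domain[OF f]
    by (rule continuous_map_eq) (auto simp: tel_domain_def tel_level_tel_proj tel_flow_tel_proj)
  ultimately show "continuous_map (prod_topology (top_of_set {0..1::real}) (Tel K f)) (Tel K f) ?k"
    using continuous_compose_quotient_map_eq by blast
  show "?k (0, p) = id p" if "p \<in> topspace (Tel K f)" for p
    using that by (auto simp: topspace_Tel tel_domain_def tel_proj_def tel_flow_0)
  show "?k (1, p) = tel_push f c p" for p
    by (simp add: tel_push_def)
qed

lemma homotopic_tel_d_tel_u_level_bounded:
  assumes f: "continuous_map K K f"
    and H: "continuous_map (prod_topology K (top_of_set {0..1})) K H"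
    and H0: "\<And>x. x \<in> topspace K \<Longrightarrow> H (x, 0) = f x"
    and H1: "\<And>x. x \<in> topspace K \<Longrightarrow> H (x, 1) = f (f x)"
    and h: "continuous_map L (Tel K f) h"
    and c: "\<And>l. l \<in> topspace L \<Longrightarrow> tel_level (h l) \<le> real c"
  shows "homotopic_with (\<lambda>_. True) L (Tel K f) (tel_d f \<circ> tel_u H \<circ> h) h"
proof -
  have fK: "f ` topspace K \<subseteq> topspace K"
    using f by (rule continuous_map_image_subset_topspace)
  have ff: "homotopic_with (\<lambda>_. True) K K f (f \<circ> f)"
    using homotopic_with_prod_homotopy[OF H] by (rule homotopic_with_eq) (simp_all add: H0 H1)
  have u: "continuous_map (Tel K f) K (tel_u H)"
    using H H0 H1 fK by (rule continuous_map_tel_u)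
  have push: "homotopic_with (\<lambda>_. True) L (Tel K f) h (tel_push f b \<circ> h)" for b
    using homotopic_with_compose_continuous_map_right[OF homotopic_id_tel_push[OF f] h] by simp
  define g where "g = tel_u H \<circ> tel_push f c \<circ> h"
  have g: "continuous_map L K g"
    using continuous_map_compose[OF conjunct2[OF homotopic_with_imp_continuous_maps[OF push]] u]
    by (simp add: g_def o_assoc)
  have "homotopic_with (\<lambda>_. True) L (Tel K f) (tel_d f \<circ> tel_u H \<circ> h) (tel_incl 0 \<circ> f \<circ> g)"
    using homotopic_with_compose_continuous_map_left[OF push
        continuous_map_compose[OF u continuous_map_compose[OF f continuous_map_tel_incl]]]
    by (simp add: g_def tel_d_eq o_assoc)
  also have "homotopic_with (\<lambda>_. True) L (Tel K f) \<dots> (tel_incl (int c + 2) \<circ> f \<circ> g)"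
    using homotopic_with_compose_continuous_map_right[OF homotopic_tel_incl_shift[OF ff, of 0 "int c + 2"] g]
    by simp
  also have "homotopic_with (\<lambda>_. True) L (Tel K f) \<dots> h"
    using homotopic_with_symD[OF push[of "int c + 2"]]
  proof (rule homotopic_with_eq)
    fix l assume "l \<in> topspace L"
    then have "h l \<in> topspace (Tel K f)" and "tel_level (h l) \<le> real_of_int (int c)"
      using c continuous_map_image_subset_topspace[OF h] by auto
    from tel_push_add_2[OF fK H0 this]
    show "(tel_incl (int c + 2) \<circ> f \<circ> g) l = (tel_push f (int c + 2) \<circ> h) l"
      by (simp add: g_def)
  qed simp_all
  finally show ?thesis .
qed

theorem lemma2p6:
  fixes K :: "'a topology" and I :: "'i set" and cdim :: "'i \<Rightarrow> nat"
    and \<Phi> :: "'i \<Rightarrow> (nat \<Rightarrow> real) \<Rightarrow> 'a"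
    and f :: "'a \<Rightarrow> 'a" and k0 :: 'a and H :: "'a \<times> real \<Rightarrow> 'a"
  assumes cw: "cw_structure K I cdim \<Phi>"
    and conn: "connected_space K"
    and base: "\<exists>i\<in>I. cdim i = 0 \<and> closed_cell cdim \<Phi> i = {k0}"
    and f_cont: "continuous_map K K f"
    and f_pointed: "f k0 = k0"
    and f_cell: "cellular_map I cdim \<Phi> f"
    and H_cont: "continuous_map (prod_topology K (top_of_set {0..1})) K H"
    and H0: "\<And>x. x \<in> topspace K \<Longrightarrow> H (x, 0) = f x"
    and H1: "\<And>x. x \<in> topspace K \<Longrightarrow> H (x, 1) = f (f x)"
  shows "\<forall>(L :: 'b topology) h. finite_cw_complex L \<and> continuous_map L (Tel K f) h \<longrightarrow>
           homotopic_with (\<lambda>_. True) L (Tel K f) (tel_d f \<circ> tel_u H \<circ> h) h"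
proof (intro allI impI, elim conjE)
  fix L :: "'b topology" and h
  assume L: "finite_cw_complex L" and h: "continuous_map L (Tel K f) h"
  obtain c :: nat where "\<And>l. l \<in> topspace L \<Longrightarrow> tel_level (h l) \<le> real c"
    using compact_space_bounded_above_nat[OF compact_space_finite_cw_complex[OF L]
        continuous_map_compose[OF h continuous_map_tel_level]] by auto
  with f_cont H_cont H0 H1 h
  show "homotopic_with (\<lambda>_. True) L (Tel K f) (tel_d f \<circ> tel_u H \<circ> h) h"
    by (rule homotopic_tel_d_tel_u_level_bounded)
qed

end
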